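(* The map $\pi^\infty:J^\infty_0(\mathbb C^p,V)/G\to J^\infty_0(\mathbb C^p,Z)$ is injective: if $F_1,F_2:\mathbb C[V]\to\mathbb C[[X_1,\dots,X_p]]$ are $\mathbb C$-algebra homomorphisms with $F_1|_{\mathbb C[V]^G}=F_2|_{\mathbb C[V]^G}$, then there is $g\in G$ with $F_2=F_1\circ g^*$, where $g^*\varphi=\varphi\circ g$.
   Context: $V$ is a finite-dimensional complex vector space, $G\subset GL(V)$ a finite group, $Z=V/G$ the orbit space with $\mathbb C[Z]=\mathbb C[V]^G$ and quotient map $\pi$. $J^\infty_0(\mathbb C^p,X)$ denotes the set of $\mathbb C$-algebra homomorphisms $\mathbb C[X]\to\mathbb C[[X_1,\dots,X_p]]$ (formal morphisms); $G$ acts on $J^\infty_0(\mathbb C^p,V)$ through its action on $\mathbb C[V]$, and $\pi^\infty$ is induced by restriction to $\mathbb C[V]^G$. *)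

theory Defs
  imports Complex_Main
begin

text \<open>The coordinate ring C[V] is modelled as the ring of polynomial functions on V
  (isomorphic to the polynomial ring since C is infinite), with pointwise operations.\<close>

inductive_set poly_fun :: "(('n::finite \<Rightarrow> complex) \<Rightarrow> complex) set" where
  const: "(\<lambda>x. c) \<in> poly_fun"
| coord: "(\<lambda>x. x i) \<in> poly_fun"
| add: "f \<in> poly_fun \<Longrightarrow> g \<in> poly_fun \<Longrightarrow> (\<lambda>x. f x + g x) \<in> poly_fun"
| mult: "f \<in> poly_fun \<Longrightarrow> g \<in> poly_fun \<Longrightarrow> (\<lambda>x. f x * g x) \<in> poly_fun"

text \<open>Formal power series in variables indexed by the finite type 'p:
  a series is a function from exponent vectors ('p => nat) to coefficients.\<close>

type_synonym 'p fps_multi = "('p \<Rightarrow> nat) \<Rightarrow> complex"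

definition ps_const :: "complex \<Rightarrow> ('p::finite) fps_multi" where
  "ps_const c = (\<lambda>m. if m = (\<lambda>_. 0) then c else 0)"

definition ps_add :: "('p::finite) fps_multi \<Rightarrow> 'p fps_multi \<Rightarrow> 'p fps_multi" where
  "ps_add f g = (\<lambda>m. f m + g m)"

definition ps_mult :: "('p::finite) fps_multi \<Rightarrow> 'p fps_multi \<Rightarrow> 'p fps_multi" where
  "ps_mult f g = (\<lambda>m. \<Sum>(a, b) \<in> {(a, b). (\<lambda>i. a i + b i) = m}. f a * g b)"

definition formal_morphism ::
  "((('n::finite \<Rightarrow> complex) \<Rightarrow> complex) \<Rightarrow> ('p::finite) fps_multi) \<Rightarrow> bool" where
  "formal_morphism F \<longleftrightarrow>
     (\<forall>c. F (\<lambda>x. c) = ps_const c) \<and>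
     (\<forall>f\<in>poly_fun. \<forall>g\<in>poly_fun. F (\<lambda>x. f x + g x) = ps_add (F f) (F g)) \<and>
     (\<forall>f\<in>poly_fun. \<forall>g\<in>poly_fun. F (\<lambda>x. f x * g x) = ps_mult (F f) (F g))"

definition clinear_map :: "(('n::finite \<Rightarrow> complex) \<Rightarrow> ('n \<Rightarrow> complex)) \<Rightarrow> bool" where
  "clinear_map g \<longleftrightarrow>
     (\<forall>x y. g (\<lambda>i. x i + y i) = (\<lambda>i. g x i + g y i)) \<and>
     (\<forall>c x. g (\<lambda>i. c * x i) = (\<lambda>i. c * g x i))"

definition finite_GL_subgroup :: "(('n::finite \<Rightarrow> complex) \<Rightarrow> ('n \<Rightarrow> complex)) set \<Rightarrow> bool" where
  "finite_GL_subgroup G \<longleftrightarrow>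
     finite G \<and> (\<forall>g\<in>G. clinear_map g \<and> bij g) \<and> id \<in> G \<and>
     (\<forall>g\<in>G. \<forall>h\<in>G. g \<circ> h \<in> G) \<and> (\<forall>g\<in>G. inv g \<in> G)"

definition invariants :: "(('n::finite \<Rightarrow> complex) \<Rightarrow> ('n \<Rightarrow> complex)) set \<Rightarrow> (('n \<Rightarrow> complex) \<Rightarrow> complex) set" where
  "invariants G = {f \<in> poly_fun. \<forall>g\<in>G. f \<circ> g = f}"

definition pullback :: "(('n \<Rightarrow> complex) \<Rightarrow> ('n \<Rightarrow> complex)) \<Rightarrow> (('n \<Rightarrow> complex) \<Rightarrow> complex) \<Rightarrow> (('n \<Rightarrow> complex) \<Rightarrow> complex)" where
  "pullback g f = f \<circ> g"

end

theory Submission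
  imports Defs "HOL-Library.FuncSet" "HOL-Computational_Algebra.Polynomial"
begin

(* For a polynomial function f, the polynomial \<Prod>g\<in>G. (Y - f \<circ> g) vanishes at Y = f and
   its coefficients, the elementary symmetric functions of the f \<circ> g, are G-invariant.
   Applying F2 and replacing the coefficients by their F1-images, F2 f becomes a root of
   \<Prod>g\<in>G. (Y - F1 (f \<circ> g)); since power series in finitely many variables form an integral
   domain, F2 f = F1 (f \<circ> g) for some g, which a priori depends on f.  If no single g
   worked for all f, pick for every g a witness f_g; a linear combination of the f_g whose
   coefficients avoid the roots of finitely many nonzero univariate polynomials is then a
   witness for every g at once, contradicting the first step. *)

section \<open>Power series in finitely many variables\<close>

definition splittings :: "('p::finite \<Rightarrow> nat) \<Rightarrow> (('p \<Rightarrow> nat) \<times> ('p \<Rightarrow> nat)) set" where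
  "splittings m = {(a, b). (\<lambda>i. a i + b i) = m}"

lemma finite_bounded_exponents: "finite {a::'p::finite \<Rightarrow> nat. \<forall>i. a i \<le> m i}"
proof -
  have "{a::'p \<Rightarrow> nat. \<forall>i. a i \<le> m i} = Pi\<^sub>E UNIV (\<lambda>i. {..m i})"
    by (auto simp: PiE_UNIV_domain Pi_def)
  then show ?thesis by (simp add: finite_PiE)
qed

lemma finite_splittings: "finite (splittings m)"
proof -
  have "splittings m \<subseteq> {a. \<forall>i. a i \<le> m i} \<times> {a. \<forall>i. a i \<le> m i}"
    by (auto simp: splittings_def)
  then show ?thesis using finite_bounded_exponents finite_subset by blast
qed

lemma ps_mult_splittings: "ps_mult f g m = (\<Sum>(a, b)\<in>splittings m. f a * g b)"
  by (simp add: ps_mult_def splittings_def)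

lemma ps_mult_commute: "ps_mult f g = ps_mult g f"
proof
  fix m
  show "ps_mult f g m = ps_mult g f m"
    unfolding ps_mult_splittings
    by (rule sum.reindex_bij_witness[where i="\<lambda>(a, b). (b, a)" and j="\<lambda>(a, b). (b, a)"])
       (auto simp: splittings_def add.commute mult.commute)
qed

lemma ps_mult_const_left: "ps_mult (ps_const c) f = (\<lambda>m. c * f m)"
proof
  fix m
  have "ps_mult (ps_const c) f m = (\<Sum>p\<in>splittings m. if p = ((\<lambda>_. 0), m) then c * f m else 0)"
    unfolding ps_mult_splittings
    by (rule sum.cong) (auto simp: splittings_def ps_const_def split: if_splits)
  also have "\<dots> = c * f m"
    by (simp only: sum.delta[OF finite_splittings]) (simp add: splittings_def)
  finally show "ps_mult (ps_const c) f m = c * f m" .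
qed

lemma ps_mult_zero_left: "ps_mult (\<lambda>_. 0) f = (\<lambda>_. 0)"
  by (simp add: ps_mult_def)

lemma ps_mult_add_left: "ps_mult (ps_add f g) h = ps_add (ps_mult f h) (ps_mult g h)"
  unfolding ps_add_def ps_mult_splittings
  by (auto simp: sum.distrib[symmetric] distrib_right intro!: sum.cong)

lemma ps_mult_assoc: "ps_mult (ps_mult f g) h = ps_mult f (ps_mult g h)"
proof
  fix m
  have "ps_mult (ps_mult f g) h m = (\<Sum>(a, b)\<in>splittings m. \<Sum>(c, d)\<in>splittings a. f c * g d * h b)"
    unfolding ps_mult_splittings by (simp add: sum_distrib_right case_prod_unfold)
  also have "\<dots> = (\<Sum>(x, y)\<in>Sigma (splittings m) (\<lambda>(a, b). splittings a).
                     f (fst y) * g (snd y) * h (snd x))"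
    by (subst sum.Sigma[symmetric]) (auto simp: finite_splittings case_prod_unfold)
  also have "\<dots> = (\<Sum>(x, y)\<in>Sigma (splittings m) (\<lambda>(a, b). splittings b).
                     f (fst x) * g (fst y) * h (snd y))"
    by (rule sum.reindex_bij_witness[where j="\<lambda>((a, b), (c, d)). ((c, \<lambda>i. d i + b i), (d, b))"
          and i="\<lambda>((a, b), (c, d)). ((\<lambda>i. a i + c i, d), (a, c))"])
       (auto simp: splittings_def fun_eq_iff add.assoc, metis add.assoc)
  also have "\<dots> = (\<Sum>(a, b)\<in>splittings m. \<Sum>(c, d)\<in>splittings b. f a * g c * h d)"
    by (subst sum.Sigma[symmetric]) (auto simp: finite_splittings case_prod_unfold)
  also have "\<dots> = ps_mult f (ps_mult g h) m"
    unfolding ps_mult_splittings by (simp add: sum_distrib_left case_prod_unfold mult.assoc)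
  finally show "ps_mult (ps_mult f g) h m = ps_mult f (ps_mult g h) m" .
qed

fun lex_le :: "'a list \<Rightarrow> ('a \<Rightarrow> nat) \<Rightarrow> ('a \<Rightarrow> nat) \<Rightarrow> bool" where
  "lex_le [] a b = True"
| "lex_le (x # xs) a b = (a x < b x \<or> (a x = b x \<and> lex_le xs a b))"

fun lex_less :: "'a list \<Rightarrow> ('a \<Rightarrow> nat) \<Rightarrow> ('a \<Rightarrow> nat) \<Rightarrow> bool" where
  "lex_less [] a b = False"
| "lex_less (x # xs) a b = (a x < b x \<or> (a x = b x \<and> lex_less xs a b))"

lemma lex_le_imp_eq_or_less: "lex_le xs a b \<Longrightarrow> (\<forall>x\<in>set xs. a x = b x) \<or> lex_less xs a b"
  by (induction xs) auto

lemma lex_less_add: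
  "lex_less xs a c \<Longrightarrow> lex_le xs b d \<Longrightarrow> lex_less xs (\<lambda>i. a i + b i) (\<lambda>i. c i + d i)"
  by (induction xs) auto

lemma lex_less_irrefl: "\<not> lex_less xs a a"
  by (induction xs) auto

lemma ex_lex_minimal: "S \<noteq> {} \<Longrightarrow> \<exists>a\<in>S. \<forall>b\<in>S. lex_le xs a b"
proof (induction xs arbitrary: S)
  case Nil
  then show ?case by auto
next
  case (Cons x xs)
  define k where "k = (LEAST k. \<exists>a\<in>S. a x = k)"
  have k_attained: "\<exists>a\<in>S. a x = k"
    unfolding k_def using Cons.prems by (intro LeastI_ex[of "\<lambda>k. \<exists>a\<in>S. a x = k"]) blast
  have k_le: "k \<le> b x" if "b \<in> S" for b
    unfolding k_def by (rule Least_le) (use that in blast)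
  define S' where "S' = {a\<in>S. a x = k}"
  from Cons.IH[of S'] k_attained obtain a where a: "a \<in> S'" "\<forall>b\<in>S'. lex_le xs a b"
    unfolding S'_def by blast
  have "lex_le (x # xs) a b" if "b \<in> S" for b
  proof (cases "b x = k")
    case True
    then show ?thesis using a that by (simp add: S'_def)
  next
    case False
    then show ?thesis using a k_le[OF that] by (simp add: S'_def)
  qed
  then show ?case using a(1) unfolding S'_def by blast
qed

(* At the sum of the lexicographically least exponents of f and g, the only nonvanishing
   term of the coefficient of the product is the product of the two lowest coefficients. *)
lemma ps_mult_no_zero_divisors:
  fixes f g :: "('p::finite) fps_multi"
  assumes "f \<noteq> (\<lambda>_. 0)" and "g \<noteq> (\<lambda>_. 0)"
  shows "ps_mult f g \<noteq> (\<lambda>_. 0)"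
proof -
  obtain xs :: "'p list" where xs: "set xs = UNIV"
    using finite_list[OF finite_UNIV] by blast
  obtain a0 where a0: "f a0 \<noteq> 0" "\<And>a. f a \<noteq> 0 \<Longrightarrow> lex_le xs a0 a"
    using ex_lex_minimal[of "{a. f a \<noteq> 0}" xs] assms(1) by auto
  obtain b0 where b0: "g b0 \<noteq> 0" "\<And>b. g b \<noteq> 0 \<Longrightarrow> lex_le xs b0 b"
    using ex_lex_minimal[of "{b. g b \<noteq> 0}" xs] assms(2) by auto
  define m where "m = (\<lambda>i. a0 i + b0 i)"
  have vanish: "f a * g b = 0" if ab: "(a, b) \<in> splittings m" "(a, b) \<noteq> (a0, b0)" for a b
  proof (rule ccontr)
    assume "f a * g b \<noteq> 0"
    then have le_a: "lex_le xs a0 a" and le_b: "lex_le xs b0 b"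
      using a0(2) b0(2) by simp_all
    from lex_le_imp_eq_or_less[OF le_a] show False
    proof
      assume "\<forall>x\<in>set xs. a0 x = a x"
      then have "a = a0" using xs by auto
      then show False using ab by (auto simp: splittings_def m_def fun_eq_iff)
    next
      assume "lex_less xs a0 a"
      from lex_less_add[OF this le_b] have "lex_less xs m m"
        using ab(1) by (simp add: splittings_def m_def)
      then show False using lex_less_irrefl by blast
    qed
  qed
  have "ps_mult f g m = (\<Sum>p\<in>splittings m. if p = (a0, b0) then f a0 * g b0 else 0)"
    unfolding ps_mult_splittings by (rule sum.cong[OF refl]) (use vanish in fastforce)
  also have "\<dots> = f a0 * g b0"
    by (simp only: sum.delta[OF finite_splittings]) (simp add: splittings_def m_def)
  finally have "ps_mult f g m \<noteq> 0" using a0(1) b0(1) by simp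
  then show ?thesis by (auto simp: fun_eq_iff)
qed

(* A copy of fps_multi, so that the coefficientwise operations can form an idom instance. *)
datatype 'p mps = MPS (coeffs: "('p \<Rightarrow> nat) \<Rightarrow> complex")

instantiation mps :: (finite) idom
begin

definition "zero_mps = MPS (\<lambda>_. 0)"
definition "one_mps = MPS (ps_const 1)"
definition "plus_mps a b = MPS (ps_add (coeffs a) (coeffs b))"
definition "times_mps a b = MPS (ps_mult (coeffs a) (coeffs b))"
definition "uminus_mps a = MPS (\<lambda>m. - coeffs a m)"
definition "minus_mps a b = MPS (\<lambda>m. coeffs a m - coeffs b m)"

instance
proof
  fix a b c :: "'a mps"
  show "a * b * c = a * (b * c)" by (simp add: times_mps_def ps_mult_assoc)
  show "a * b = b * a" by (simp add: times_mps_def ps_mult_commute)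
  show "1 * a = a" by (simp add: times_mps_def one_mps_def ps_mult_const_left)
  show "a + b + c = a + (b + c)" by (simp add: plus_mps_def ps_add_def add.assoc)
  show "a + b = b + a" by (simp add: plus_mps_def ps_add_def add.commute)
  show "0 + a = a" by (simp add: plus_mps_def ps_add_def zero_mps_def)
  show "- a + a = 0" by (simp add: plus_mps_def ps_add_def zero_mps_def uminus_mps_def)
  show "a - b = a + - b" by (simp add: plus_mps_def ps_add_def minus_mps_def uminus_mps_def)
  show "(a + b) * c = a * c + b * c" by (simp add: plus_mps_def times_mps_def ps_mult_add_left)
  show "a * (b + c) = a * b + a * c"
    by (simp add: plus_mps_def times_mps_def ps_mult_commute[of "coeffs a"] ps_mult_add_left)
  show "0 * a = 0" by (simp add: times_mps_def zero_mps_def ps_mult_zero_left)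
  then show "a * 0 = 0" by (simp add: times_mps_def zero_mps_def ps_mult_commute)
  show "(0::'a mps) \<noteq> 1"
    by (auto simp: zero_mps_def one_mps_def ps_const_def fun_eq_iff)
  show "a \<noteq> 0 \<Longrightarrow> b \<noteq> 0 \<Longrightarrow> a * b \<noteq> 0"
    using ps_mult_no_zero_divisors[of "coeffs a" "coeffs b"]
    by (cases a; cases b) (auto simp: zero_mps_def times_mps_def)
qed

end

lemma coeffs_sum: "coeffs (\<Sum>a\<in>A. f a) m = (\<Sum>a\<in>A. coeffs (f a) m)"
  by (induction A rule: infinite_finite_induct) (simp_all add: zero_mps_def plus_mps_def ps_add_def)

section \<open>Polynomial functions and formal morphisms\<close>

lemma poly_fun_sum:
  "finite S \<Longrightarrow> (\<And>s. s \<in> S \<Longrightarrow> u s \<in> poly_fun) \<Longrightarrow> (\<lambda>x. \<Sum>s\<in>S. u s x) \<in> poly_fun"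
  by (induction S rule: finite_induct) (auto intro: poly_fun.intros)

lemma poly_fun_prod:
  "finite S \<Longrightarrow> (\<And>s. s \<in> S \<Longrightarrow> u s \<in> poly_fun) \<Longrightarrow> (\<lambda>x. \<Prod>s\<in>S. u s x) \<in> poly_fun"
  by (induction S rule: finite_induct) (auto intro: poly_fun.intros)

lemma poly_fun_power: "f \<in> poly_fun \<Longrightarrow> (\<lambda>x. f x ^ n) \<in> poly_fun"
  by (induction n) (auto intro: poly_fun.intros)

lemma poly_fun_scale: "f \<in> poly_fun \<Longrightarrow> (\<lambda>x. c * f x) \<in> poly_fun"
  by (rule poly_fun.mult[OF poly_fun.const])

lemma poly_fun_uminus: "f \<in> poly_fun \<Longrightarrow> (\<lambda>x. - f x) \<in> poly_fun"
  using poly_fun_scale[of f "-1"] by simp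

lemma clinear_map_sum:
  assumes "clinear_map g" "finite S"
  shows "g (\<lambda>i. \<Sum>j\<in>S. c j * v j i) = (\<lambda>i. \<Sum>j\<in>S. c j * g (v j) i)"
  using assms(2)
proof (induction S rule: finite_induct)
  case empty
  have "g (\<lambda>i. 0 * v i) = (\<lambda>i. 0 * g v i)" for v
    using assms(1) unfolding clinear_map_def by blast
  then show ?case by simp
next
  case (insert j S)
  then show ?case
    using assms(1) unfolding clinear_map_def by simp
qed

lemma clinear_map_coordinate:
  fixes g :: "('n::finite \<Rightarrow> complex) \<Rightarrow> ('n \<Rightarrow> complex)"
  assumes "clinear_map g"
  shows "(\<lambda>x. g x i) = (\<lambda>x. \<Sum>j\<in>UNIV. x j * g (\<lambda>k. if k = j then 1 else 0) i)"
proof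
  fix x :: "'n \<Rightarrow> complex"
  have "x = (\<lambda>i. \<Sum>j\<in>UNIV. x j * (\<lambda>k. if k = j then 1 else 0) i)"
    by (simp add: if_distrib cong: if_cong)
  then have "g x = g (\<lambda>i. \<Sum>j\<in>UNIV. x j * (\<lambda>k. if k = j then 1 else 0) i)" by simp
  also have "\<dots> = (\<lambda>i. \<Sum>j\<in>UNIV. x j * g (\<lambda>k. if k = j then 1 else 0) i)"
    by (rule clinear_map_sum[OF assms finite_UNIV])
  finally show "g x i = (\<Sum>j\<in>UNIV. x j * g (\<lambda>k. if k = j then 1 else 0) i)" by simp
qed

lemma poly_fun_pullback:
  assumes "clinear_map g" "f \<in> poly_fun"
  shows "pullback g f \<in> poly_fun"
  unfolding pullback_def comp_def using assms(2)
proof (induction f rule: poly_fun.induct)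
  case (coord i)
  show ?case
    by (subst clinear_map_coordinate[OF assms(1)])
       (rule poly_fun_sum[OF finite_UNIV], rule poly_fun.mult[OF poly_fun.coord poly_fun.const])
qed (simp_all add: poly_fun.intros)

definition to_mps ::
  "((('n::finite \<Rightarrow> complex) \<Rightarrow> complex) \<Rightarrow> ('p::finite) fps_multi) \<Rightarrow> (('n \<Rightarrow> complex) \<Rightarrow> complex) \<Rightarrow> 'p mps"
  where "to_mps F f = MPS (F f)"

context
  fixes F :: "(('n::finite \<Rightarrow> complex) \<Rightarrow> complex) \<Rightarrow> ('p::finite) fps_multi"
  assumes F: "formal_morphism F"
begin

lemma to_mps_const: "to_mps F (\<lambda>x. c) = MPS (ps_const c)"
  using F by (simp add: to_mps_def formal_morphism_def)

lemma to_mps_zero: "to_mps F (\<lambda>x. 0) = 0"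
  by (simp add: to_mps_const ps_const_def zero_mps_def)

lemma to_mps_one: "to_mps F (\<lambda>x. 1) = 1"
  by (simp add: to_mps_const one_mps_def)

lemma to_mps_add:
  "f \<in> poly_fun \<Longrightarrow> g \<in> poly_fun \<Longrightarrow> to_mps F (\<lambda>x. f x + g x) = to_mps F f + to_mps F g"
  using F by (simp add: to_mps_def formal_morphism_def plus_mps_def)

lemma to_mps_mult:
  "f \<in> poly_fun \<Longrightarrow> g \<in> poly_fun \<Longrightarrow> to_mps F (\<lambda>x. f x * g x) = to_mps F f * to_mps F g"
  using F by (simp add: to_mps_def formal_morphism_def times_mps_def)

lemma to_mps_scale: "f \<in> poly_fun \<Longrightarrow> to_mps F (\<lambda>x. c * f x) = MPS (\<lambda>m. c * F f m)"
  using to_mps_mult[OF poly_fun.const, of f c] to_mps_const[of c]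
  by (simp add: to_mps_def times_mps_def ps_mult_const_left)

lemma to_mps_uminus: "f \<in> poly_fun \<Longrightarrow> to_mps F (\<lambda>x. - f x) = - to_mps F f"
  using to_mps_scale[of f "-1"] by (simp add: uminus_mps_def to_mps_def)

lemma to_mps_power: "f \<in> poly_fun \<Longrightarrow> to_mps F (\<lambda>x. f x ^ n) = to_mps F f ^ n"
  by (induction n) (simp_all add: to_mps_one to_mps_mult poly_fun_power)

lemma to_mps_sum:
  "finite S \<Longrightarrow> (\<And>s. s \<in> S \<Longrightarrow> u s \<in> poly_fun) \<Longrightarrow>
    to_mps F (\<lambda>x. \<Sum>s\<in>S. u s x) = (\<Sum>s\<in>S. to_mps F (u s))"
  by (induction S rule: finite_induct) (simp_all add: to_mps_zero to_mps_add poly_fun_sum)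

lemma to_mps_prod:
  "finite S \<Longrightarrow> (\<And>s. s \<in> S \<Longrightarrow> u s \<in> poly_fun) \<Longrightarrow>
    to_mps F (\<lambda>x. \<Prod>s\<in>S. u s x) = (\<Prod>s\<in>S. to_mps F (u s))"
  by (induction S rule: finite_induct) (simp_all add: to_mps_one to_mps_mult poly_fun_prod)

lemma formal_morphism_linear_combination:
  assumes "finite S" and "\<And>s. s \<in> S \<Longrightarrow> u s \<in> poly_fun"
  shows "F (\<lambda>x. \<Sum>s\<in>S. c s * u s x) m = (\<Sum>s\<in>S. c s * F (u s) m)"
proof -
  have "F (\<lambda>x. \<Sum>s\<in>S. c s * u s x) m = coeffs (to_mps F (\<lambda>x. \<Sum>s\<in>S. c s * u s x)) m"
    by (simp add: to_mps_def)
  also have "\<dots> = coeffs (\<Sum>s\<in>S. to_mps F (\<lambda>x. c s * u s x)) m"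
    by (simp add: to_mps_sum poly_fun_scale assms)
  also have "\<dots> = (\<Sum>s\<in>S. c s * F (u s) m)"
    by (simp add: coeffs_sum to_mps_scale assms)
  finally show ?thesis .
qed

end

section \<open>Elementary symmetric functions\<close>

definition esym :: "'a set \<Rightarrow> ('a \<Rightarrow> 'b::comm_semiring_1) \<Rightarrow> nat \<Rightarrow> 'b" where
  "esym A z k = (\<Sum>U | U \<subseteq> A \<and> card U = k. \<Prod>a\<in>U. z a)"

lemma finite_subsets_of_card: "finite A \<Longrightarrow> finite {U. U \<subseteq> A \<and> card U = k}"
  by (rule finite_subset[of _ "Pow A"]) auto

lemma prod_add_esym:
  fixes z :: "'a \<Rightarrow> 'b::comm_semiring_1"
  assumes "finite A"
  shows "(\<Prod>a\<in>A. y + z a) = (\<Sum>k\<le>card A. esym A z k * y ^ (card A - k))"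
proof -
  have "(\<Prod>a\<in>A. y + z a) = (\<Prod>a\<in>A. z a + y)"
    by (simp add: add.commute)
  also have "\<dots> = (\<Sum>U\<in>Pow A. (\<Prod>a\<in>U. z a) * (\<Prod>a\<in>A - U. y))"
    by (rule prod_add[OF assms])
  also have "\<dots> = (\<Sum>U\<in>Pow A. (\<Prod>a\<in>U. z a) * y ^ (card A - card U))"
    by (rule sum.cong[OF refl]) (auto simp: card_Diff_subset finite_subset[OF _ assms])
  also have "\<dots> = (\<Sum>k\<le>card A. \<Sum>U | U \<in> Pow A \<and> card U = k. (\<Prod>a\<in>U. z a) * y ^ (card A - card U))"
    by (rule sum.group[symmetric]) (auto simp: assms card_mono)
  also have "\<dots> = (\<Sum>k\<le>card A. esym A z k * y ^ (card A - k))"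
    by (simp add: esym_def sum_distrib_right)
  finally show ?thesis .
qed

lemma esym_reindex:
  assumes "finite A" and "bij_betw \<sigma> A A"
  shows "esym A (z \<circ> \<sigma>) k = esym A z k"
proof -
  let ?S = "{U. U \<subseteq> A \<and> card U = k}"
  have inj: "inj_on \<sigma> A"
    using assms(2) by (rule bij_betw_imp_inj_on)
  have "inj_on (image \<sigma>) ?S"
    using bij_betw_imp_inj_on[OF bij_betw_Pow[OF assms(2)]] by (rule inj_on_subset) auto
  moreover have "image \<sigma> ` ?S \<subseteq> ?S"
    using assms(2) inj by (auto simp: bij_betw_def card_image inj_on_subset)
  moreover have "finite ?S"
    using assms(1) by (rule finite_subsets_of_card)
  ultimately have "bij_betw (image \<sigma>) ?S ?S"
    by (simp add: bij_betw_def endo_inj_surj)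
  then have "esym A z k = (\<Sum>U\<in>?S. \<Prod>a\<in>\<sigma> ` U. z a)"
    unfolding esym_def by (rule sum.reindex_bij_betw[symmetric])
  also have "\<dots> = esym A (z \<circ> \<sigma>) k"
    unfolding esym_def using inj by (intro sum.cong refl) (auto simp: prod.reindex inj_on_subset)
  finally show ?thesis by simp
qed

lemma poly_fun_esym:
  assumes "finite A" and "\<And>a. a \<in> A \<Longrightarrow> u a \<in> poly_fun"
  shows "(\<lambda>x. esym A (\<lambda>a. u a x) k) \<in> poly_fun"
  unfolding esym_def using assms
  by (intro poly_fun_sum poly_fun_prod finite_subsets_of_card) (auto intro: finite_subset[OF _ assms(1)])

lemma to_mps_esym:
  assumes "formal_morphism F" "finite A" and "\<And>a. a \<in> A \<Longrightarrow> u a \<in> poly_fun"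
  shows "to_mps F (\<lambda>x. esym A (\<lambda>a. u a x) k) = esym A (\<lambda>a. to_mps F (u a)) k"
proof -
  let ?S = "{U. U \<subseteq> A \<and> card U = k}"
  have fin_U: "finite U" and poly_U: "\<And>a. a \<in> U \<Longrightarrow> u a \<in> poly_fun" if "U \<in> ?S" for U
    using that finite_subset[OF _ assms(2)] assms(3) by blast+
  have "to_mps F (\<lambda>x. \<Sum>U\<in>?S. \<Prod>a\<in>U. u a x) = (\<Sum>U\<in>?S. to_mps F (\<lambda>x. \<Prod>a\<in>U. u a x))"
    using finite_subsets_of_card[OF assms(2)] by (rule to_mps_sum[OF assms(1)])
      (rule poly_fun_prod[OF fin_U poly_U])
  also have "\<dots> = (\<Sum>U\<in>?S. \<Prod>a\<in>U. to_mps F (u a))"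
    by (rule sum.cong[OF refl], rule to_mps_prod[OF assms(1) fin_U poly_U])
  finally show ?thesis by (simp only: esym_def)
qed

lemma finite_GL_subgroup_bij_betw_comp:
  assumes "finite_GL_subgroup G" and "h \<in> G"
  shows "bij_betw (\<lambda>g. g \<circ> h) G G"
proof (rule bij_betw_byWitness[where f'="\<lambda>g. g \<circ> inv h"])
  have "bij h" using assms unfolding finite_GL_subgroup_def by blast
  then have "inv h \<circ> h = id" "h \<circ> inv h = id"
    by (simp_all add: bij_is_inj bij_is_surj flip: surj_iff)
  then show "\<forall>g\<in>G. g \<circ> h \<circ> inv h = g" "\<forall>g\<in>G. g \<circ> inv h \<circ> h = g"
    by (simp_all add: comp_assoc)
  show "(\<lambda>g. g \<circ> h) ` G \<subseteq> G" "(\<lambda>g. g \<circ> inv h) ` G \<subseteq> G"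
    using assms unfolding finite_GL_subgroup_def by auto
qed

lemma esym_pullbacks_invariant:
  assumes G: "finite_GL_subgroup G" and f: "f \<in> poly_fun"
  shows "(\<lambda>x. esym G (\<lambda>g. f (g x)) k) \<in> invariants G"
proof -
  have fin: "finite G" and lin: "\<And>g. g \<in> G \<Longrightarrow> clinear_map g"
    using G unfolding finite_GL_subgroup_def by auto
  have "(\<lambda>x. esym G (\<lambda>g. pullback g f x) k) \<in> poly_fun"
    using fin lin f by (intro poly_fun_esym poly_fun_pullback)
  moreover have "esym G (\<lambda>g. f (g (h x))) k = esym G (\<lambda>g. f (g x)) k" if "h \<in> G" for h x
    using esym_reindex[OF fin finite_GL_subgroup_bij_betw_comp[OF G that], of "\<lambda>g. f (g x)"]
    by (simp add: comp_def)
  ultimately show ?thesis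
    by (simp add: invariants_def pullback_def comp_def)
qed

lemma ex_pullback_eq_of_poly_fun:
  fixes G :: "(('n::finite \<Rightarrow> complex) \<Rightarrow> ('n \<Rightarrow> complex)) set"
    and F1 F2 :: "(('n \<Rightarrow> complex) \<Rightarrow> complex) \<Rightarrow> ('p::finite) fps_multi"
  assumes G: "finite_GL_subgroup G"
    and F1: "formal_morphism F1" and F2: "formal_morphism F2"
    and agree: "\<forall>f\<in>invariants G. F1 f = F2 f"
    and f: "f \<in> poly_fun"
  shows "\<exists>g\<in>G. F2 f = F1 (pullback g f)"
proof -
  have fin: "finite G" and "id \<in> G" and lin: "\<And>g. g \<in> G \<Longrightarrow> clinear_map g"
    using G unfolding finite_GL_subgroup_def by auto
  define u where "u g = (\<lambda>x. - f (g x))" for g :: "('n \<Rightarrow> complex) \<Rightarrow> ('n \<Rightarrow> complex)"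
  have u: "u g \<in> poly_fun" if "g \<in> G" for g
    using poly_fun_uminus[OF poly_fun_pullback[OF lin[OF that] f]]
    by (simp add: u_def pullback_def)
  define e where "e k = (\<lambda>x. esym G (\<lambda>g. u g x) k)" for k
  have e_inv: "e k \<in> invariants G" for k
    using esym_pullbacks_invariant[OF G poly_fun_uminus[OF f]] by (simp add: e_def u_def)
  then have e: "e k \<in> poly_fun" for k
    by (simp add: invariants_def)
  let ?N = "card G"
  have "(\<lambda>x. \<Prod>g\<in>G. f x + u g x) = (\<lambda>x. 0)"
    using fin \<open>id \<in> G\<close> by (auto simp: u_def fun_eq_iff intro!: bexI[of _ id])
  then have "0 = to_mps F2 (\<lambda>x. \<Prod>g\<in>G. f x + u g x)"
    by (simp add: to_mps_zero[OF F2])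
  also have "\<dots> = to_mps F2 (\<lambda>x. \<Sum>k\<le>?N. e k x * f x ^ (?N - k))"
    by (simp add: prod_add_esym[OF fin] e_def)
  also have "\<dots> = (\<Sum>k\<le>?N. to_mps F2 (\<lambda>x. e k x * f x ^ (?N - k)))"
    by (rule to_mps_sum[OF F2 finite_atMost]) (rule poly_fun.mult[OF e poly_fun_power[OF f]])
  also have "\<dots> = (\<Sum>k\<le>?N. to_mps F2 (e k) * to_mps F2 f ^ (?N - k))"
    by (simp add: to_mps_mult[OF F2 e poly_fun_power[OF f]] to_mps_power[OF F2 f])
  also have "\<dots> = (\<Sum>k\<le>?N. to_mps F1 (e k) * to_mps F2 f ^ (?N - k))"
    using agree e_inv by (simp add: to_mps_def)
  also have "\<dots> = (\<Sum>k\<le>?N. esym G (\<lambda>g. to_mps F1 (u g)) k * to_mps F2 f ^ (?N - k))"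
    by (simp add: e_def to_mps_esym[OF F1 fin] u)
  also have "\<dots> = (\<Prod>g\<in>G. to_mps F2 f + to_mps F1 (u g))"
    by (simp add: prod_add_esym[OF fin])
  finally have "(\<Prod>g\<in>G. to_mps F2 f + to_mps F1 (u g)) = 0"
    by (rule sym)
  then obtain g where "g \<in> G" and "to_mps F2 f + to_mps F1 (u g) = 0"
    by (auto simp only: prod_zero_iff[OF fin])
  moreover have "to_mps F1 (u g) = - to_mps F1 (pullback g f)"
    using to_mps_uminus[OF F1 poly_fun_pullback[OF lin f]] \<open>g \<in> G\<close>
    by (simp add: u_def pullback_def comp_def)
  ultimately show ?thesis
    by (auto simp: to_mps_def add_eq_0_iff)
qed

lemma ex_linear_combination_nonzero:
  fixes d :: "'a \<Rightarrow> 'b \<Rightarrow> 'c::{idom, ring_char_0}"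
  assumes A: "finite A" and B: "finite B" and nonzero: "\<And>b. b \<in> B \<Longrightarrow> \<exists>a\<in>A. d a b \<noteq> 0"
  shows "\<exists>c. \<forall>b\<in>B. (\<Sum>a\<in>A. c a * d a b) \<noteq> 0"
proof -
  obtain idx :: "'a \<Rightarrow> nat" and n where "inj_on idx A"
    using finite_imp_inj_to_nat_seg[OF A] by blast
  define p where "p b = (\<Sum>a\<in>A. monom (d a b) (idx a))" for b
  have "p b \<noteq> 0" if b: "b \<in> B" for b
  proof
    assume "p b = 0"
    obtain a where a: "a \<in> A" "d a b \<noteq> 0"
      using nonzero[OF b] by blast
    have "coeff (p b) (idx a) = (\<Sum>a'\<in>A. if a' = a then d a' b else 0)"
      unfolding p_def coeff_sum coeff_monom
      using \<open>inj_on idx A\<close> a(1) by (intro sum.cong refl) (auto dest: inj_onD)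
    also have "\<dots> = d a b"
      using A a(1) by simp
    finally show False
      using \<open>p b = 0\<close> a(2) by simp
  qed
  then have "finite (\<Union>b\<in>B. {t. poly (p b) t = 0})"
    using B poly_roots_finite by blast
  then obtain t :: 'c where t: "\<And>b. b \<in> B \<Longrightarrow> poly (p b) t \<noteq> 0"
    using ex_new_if_finite[OF infinite_UNIV_char_0] by blast
  have "poly (p b) t = (\<Sum>a\<in>A. t ^ idx a * d a b)" for b
    by (simp add: p_def poly_sum poly_monom mult.commute)
  then show ?thesis
    using t by (intro exI[of _ "\<lambda>a. t ^ idx a"]) auto
qed

lemma ex_poly_fun_pullback_neq_all:
  fixes G :: "(('n::finite \<Rightarrow> complex) \<Rightarrow> ('n \<Rightarrow> complex)) set"
    and F1 F2 :: "(('n \<Rightarrow> complex) \<Rightarrow> complex) \<Rightarrow> ('p::finite) fps_multi"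
  assumes fin: "finite G" and lin: "\<And>g. g \<in> G \<Longrightarrow> clinear_map g"
    and F1: "formal_morphism F1" and F2: "formal_morphism F2"
    and witnesses: "\<forall>g\<in>G. \<exists>w\<in>poly_fun. F2 w \<noteq> F1 (pullback g w)"
  shows "\<exists>f\<in>poly_fun. \<forall>g\<in>G. F2 f \<noteq> F1 (pullback g f)"
proof -
  from witnesses have "\<forall>g\<in>G. \<exists>w\<in>poly_fun. \<exists>m. F2 w m \<noteq> F1 (pullback g w) m"
    by (auto simp: fun_eq_iff)
  then obtain w m where w: "\<And>g. g \<in> G \<Longrightarrow> w g \<in> poly_fun"
    and m: "\<And>g. g \<in> G \<Longrightarrow> F2 (w g) (m g) \<noteq> F1 (pullback g (w g)) (m g)"
    by metis
  define d where "d g h = F2 (w g) (m h) - F1 (pullback h (w g)) (m h)" for g h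
  obtain c where c: "\<And>h. h \<in> G \<Longrightarrow> (\<Sum>g\<in>G. c g * d g h) \<noteq> 0"
    using ex_linear_combination_nonzero[OF fin fin, of d] m unfolding d_def by force
  define f where "f = (\<lambda>x. \<Sum>g\<in>G. c g * w g x)"
  have "F2 f (m h) - F1 (pullback h f) (m h) = (\<Sum>g\<in>G. c g * d g h)" if h: "h \<in> G" for h
  proof -
    have "pullback h f = (\<lambda>x. \<Sum>g\<in>G. c g * pullback h (w g) x)"
      by (simp add: f_def pullback_def comp_def)
    then show ?thesis
      using poly_fun_pullback[OF lin[OF h] w]
      by (simp add: f_def d_def formal_morphism_linear_combination[OF F2 fin w]
          formal_morphism_linear_combination[OF F1 fin] sum_subtractf right_diff_distrib)
  qed
  moreover have "f \<in> poly_fun"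
    unfolding f_def using fin w by (intro poly_fun_sum poly_fun_scale)
  ultimately show ?thesis
    using c by (metis right_minus_eq)
qed

theorem corollary5p4:
  fixes G :: "(('n::finite \<Rightarrow> complex) \<Rightarrow> ('n \<Rightarrow> complex)) set"
    and F1 F2 :: "(('n \<Rightarrow> complex) \<Rightarrow> complex) \<Rightarrow> ('p::finite) fps_multi"
  assumes "finite_GL_subgroup G"
    and "formal_morphism F1" and "formal_morphism F2"
    and "\<forall>f\<in>invariants G. F1 f = F2 f"
  shows "\<exists>g\<in>G. \<forall>f\<in>poly_fun. F2 f = F1 (pullback g f)"
proof (rule ccontr)
  have fin: "finite G" and lin: "\<And>g. g \<in> G \<Longrightarrow> clinear_map g"
    using assms(1) unfolding finite_GL_subgroup_def by auto
  assume "\<not> ?thesis"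
  then have "\<forall>g\<in>G. \<exists>w\<in>poly_fun. F2 w \<noteq> F1 (pullback g w)"
    by blast
  then obtain f where f: "f \<in> poly_fun" and neq: "\<forall>g\<in>G. F2 f \<noteq> F1 (pullback g f)"
    using ex_poly_fun_pullback_neq_all[OF fin lin assms(2,3)] by blast
  then show False
    using ex_pullback_eq_of_poly_fun[OF assms f] by blast
qed

end
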